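(* If a fixed point of the function $\mathbf{h}$ exists, it is unique.
   Context: Let $\mathbf{A}\in\mathbb{R}^{n\times n}$ be partitioned into square $b\times b$ blocks, and $S_B$ a set of block indices containing all diagonal blocks. The unknowns (entries of the block ILU factors $\mathbf{L}_{ij}$, $i>j$, and $\mathbf{U}_{ij}$, $i\le j$, for $(i,j)\in S_B$) form $\mathbf{x}\in\mathbb{R}^m$, $m=|S_B|b^2$, with $\mathbf{X}_{ij}$ the $b\times b$ block for index $(i,j)$. The map $\mathbf{h}:D_B\to\mathbb{R}^m$ is given blockwise by $\mathbf{H}_{ij}(\mathbf{x})=(\mathbf{A}_{ij}-\sum_{k=1}^{j-1}\mathbf{X}_{ik}\mathbf{X}_{kj})\mathbf{X}_{jj}^{-1}$ for $i>j$ and $\mathbf{H}_{ij}(\mathbf{x})=\mathbf{A}_{ij}-\sum_{k=1}^{i-1}\mathbf{X}_{ik}\mathbf{X}_{kj}$ for $i\le j$, on $D_B:=\{\mathbf{x}: \mathbf{X}_{jj}\text{ nonsingular for all diagonal blocks}\}$. *)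

theory Defs
  imports "HOL-Analysis.Analysis"
begin

text \<open>Block ILU setting.
  Block indices are 1..N. A block-vector of unknowns x is given by its blocks
  X i j for (i,j) in the sparsity pattern S (values outside S are irrelevant).
  In the sums, only products X_ik X_kj with both indices in S occur
  (entries outside the pattern are zero in the incomplete factors).\<close>

definition blk_sum ::
  "(nat \<times> nat) set \<Rightarrow> (nat \<Rightarrow> nat \<Rightarrow> real^'b^'b) \<Rightarrow> nat \<Rightarrow> nat \<Rightarrow> nat \<Rightarrow> real^'b^'b"
  where "blk_sum S X i j r =
    (\<Sum>k\<in>{1..<r}. if (i,k) \<in> S \<and> (k,j) \<in> S then X i k ** X k j else 0)"

definition blk_h ::
  "(nat \<Rightarrow> nat \<Rightarrow> real^'b^'b) \<Rightarrow> (nat \<times> nat) set \<Rightarrow> (nat \<Rightarrow> nat \<Rightarrow> real^'b^'b)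
    \<Rightarrow> nat \<Rightarrow> nat \<Rightarrow> real^'b^'b"
  where "blk_h A S X i j =
    (if i > j then (A i j - blk_sum S X i j j) ** matrix_inv (X j j)
     else A i j - blk_sum S X i j i)"

definition in_DB :: "nat \<Rightarrow> (nat \<Rightarrow> nat \<Rightarrow> real^'b^'b) \<Rightarrow> bool"
  where "in_DB N X = (\<forall>j\<in>{1..N}. invertible (X j j))"

definition is_fixed_point ::
  "(nat \<Rightarrow> nat \<Rightarrow> real^'b^'b) \<Rightarrow> (nat \<times> nat) set \<Rightarrow> (nat \<Rightarrow> nat \<Rightarrow> real^'b^'b) \<Rightarrow> bool"
  where "is_fixed_point A S X = (\<forall>(i,j)\<in>S. blk_h A S X i j = X i j)"

end

theory Submission
  imports Defs
begin

text \<open>The block H_ij only involves blocks that forward substitution computes before (i,j):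
  products X_ik X_kj with k < min i j and, for i > j, the diagonal block X_jj.
  Ordering the blocks accordingly, two fixed points agree on each block as soon as they agree
  on all earlier ones, and well-founded induction concludes. Invertibility of the diagonal
  blocks plays no role, since equal blocks have equal (possibly junk) inverses.\<close>

text \<open>Stage min i j of the factorization computes the U-blocks of row i before the L-blocks of
  column j, as the latter need the diagonal block U_jj.\<close>
definition blk_rank :: "nat \<Rightarrow> nat \<Rightarrow> nat"
  where "blk_rank i j = 2 * min i j + (if j < i then 1 else 0)"

lemma blk_rank_less_left: "k < min i j \<Longrightarrow> blk_rank i k < blk_rank i j"
  and blk_rank_less_right: "k < min i j \<Longrightarrow> blk_rank k j < blk_rank i j"
  and blk_rank_diag_less: "j < i \<Longrightarrow> blk_rank j j < blk_rank i j"
  unfolding blk_rank_def by auto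

lemma blk_sum_cong:
  assumes "\<And>k. k \<in> {1..<r} \<Longrightarrow> (i,k) \<in> S \<Longrightarrow> (k,j) \<in> S \<Longrightarrow> X i k = Y i k \<and> X k j = Y k j"
  shows "blk_sum S X i j r = blk_sum S Y i j r"
  unfolding blk_sum_def using assms by (intro sum.cong) auto

lemma blk_h_cong:
  assumes earlier: "\<And>a b. (a,b) \<in> S \<Longrightarrow> blk_rank a b < blk_rank i j \<Longrightarrow> X a b = Y a b"
    and diag: "j < i \<Longrightarrow> (j,j) \<in> S"
  shows "blk_h A S X i j = blk_h A S Y i j"
proof -
  have sums: "blk_sum S X i j r = blk_sum S Y i j r" if "r \<le> min i j" for r
    using that earlier blk_rank_less_left blk_rank_less_right
    by (intro blk_sum_cong) (meson atLeastLessThan_iff less_le_trans)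
  show ?thesis
  proof (cases "j < i")
    case True
    with diag earlier have "X j j = Y j j" by (simp add: blk_rank_diag_less)
    with True sums[of j] show ?thesis by (simp add: blk_h_def)
  next
    case False
    with sums[of i] show ?thesis by (simp add: blk_h_def)
  qed
qed

lemma fixed_points_agree:
  assumes diag: "\<And>i j. (i,j) \<in> S \<Longrightarrow> j < i \<Longrightarrow> (j,j) \<in> S"
    and X: "is_fixed_point A S X" and Y: "is_fixed_point A S Y"
    and ij: "(i,j) \<in> S"
  shows "X i j = Y i j"
  using ij
proof (induction "blk_rank i j" arbitrary: i j rule: less_induct)
  case less
  have "blk_h A S X i j = blk_h A S Y i j"
    using less diag by (intro blk_h_cong) auto
  with X Y less.prems show ?case
    unfolding is_fixed_point_def by fastforce
qed

theorem theorem7: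
  fixes A X Y :: "nat \<Rightarrow> nat \<Rightarrow> real^'b^'b" and N :: nat and S :: "(nat \<times> nat) set"
  assumes "S \<subseteq> {1..N} \<times> {1..N}"
    and "\<forall>j\<in>{1..N}. (j,j) \<in> S"
    and "in_DB N X" and "is_fixed_point A S X"
    and "in_DB N Y" and "is_fixed_point A S Y"
  shows "\<forall>(i,j)\<in>S. X i j = Y i j"
proof -
  have "(j,j) \<in> S" if "(i,j) \<in> S" for i j
    using that assms(1,2) by auto
  with assms(4,6) show ?thesis
    using fixed_points_agree by blast
qed

end
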